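(* Let $W$ be a random vector in $\mathbb R^p$ with $k\le\lambda_{\min}(E[WW^\top])$ and $\sup_{\|\Delta\|_2=1}\|\langle\Delta,W\rangle\|_{\psi_2}\le K$, and let $f:\mathbb R\to\mathbb R$ satisfy $|f(u)-f(v)|\le K\exp\{K(|u|+|v|)\}|u-v|$ for all $u,v$. Then there is a function $B_1:\mathbb R_+^5\to\mathbb R_+$, increasing in its first and in its second argument, such that for all $l\in\mathbb N$ and $\theta,\Delta\in\mathbb R^p$, $$E^{1/l}\{|f(\langle\theta+\Delta,W\rangle)-f(\langle\theta,W\rangle)|^l\}\le B_1(\|\theta\|_2,\|\Delta\|_2,l,k,K)\,E^{1/2}(\langle W,\Delta\rangle^2).$$
   Context: $k,K>0$ are constants. For a real random variable $U$, $\|U\|_{\psi_2}=\sup_{m\in\mathbb N}(E|U|^m)^{1/m}/\sqrt m$. *)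

theory Defs
  imports "HOL-Probability.Probability"
begin

definition psi2_norm :: "'a measure \<Rightarrow> ('a \<Rightarrow> real) \<Rightarrow> ereal" where
  "psi2_norm M U = (SUP m\<in>{1::nat..}.
     (if integrable M (\<lambda>x. \<bar>U x\<bar> ^ m)
      then ereal ((integral\<^sup>L M (\<lambda>x. \<bar>U x\<bar> ^ m)) powr (1 / real m) / sqrt (real m))
      else \<infinity>))"

definition second_moment :: "'a measure \<Rightarrow> ('a \<Rightarrow> real ^ 'p) \<Rightarrow> real ^ 'p ^ 'p" where
  "second_moment M W = (\<chi> i j. integral\<^sup>L M (\<lambda>x. W x $ i * W x $ j))"

definition lambda_min :: "real ^ 'p ^ 'p \<Rightarrow> real" where
  "lambda_min A = Inf {c. \<exists>v. v \<noteq> 0 \<and> A *v v = c *\<^sub>R v}"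

end

theory Submission
  imports Defs
begin

(*
  The psi_2 bound gives E |<v, W>|^m <= (K |v| sqrt m)^m for every direction v.  Summing the
  exponential series with these moments yields E exp(<v, W>^2 / (4 e K^2 |v|^2)) <= 2, hence
  E exp(s |<v, W>|) <= 2 exp(e K^2 s^2 |v|^2).
  By the growth condition on f, |f(<theta + Delta, W>) - f(<theta, W>)|^l is at most
  K^l exp(l K (2 |<theta, W>| + |<Delta, W>|)) |<Delta, W>|^l.  The AM-GM inequality with weight
  |Delta|^l splits this into exponential moments of <theta, W> and <Delta, W> and the 2l-th moment
  of <Delta, W>, each contributing a factor |Delta|^l after integration.  Finally the minimum of the
  Rayleigh quotient of E[W W^T] is an eigenvalue, so k |Delta|^2 <= E <W, Delta>^2, which turns
  |Delta| into E^(1/2) <W, Delta>^2 / sqrt k.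
*)

lemma exp_real_sums: "(\<lambda>n. x ^ n / fact n) sums exp (x::real)"
  using exp_converges[of x] by (simp add: divide_inverse mult.commute)

lemma power_div_fact_le_exp:
  fixes x :: real
  assumes "0 \<le> x"
  shows "x ^ n / fact n \<le> exp x"
  using sum_le_suminf[of "\<lambda>i. x ^ i / fact i" "{n}"] exp_real_sums[of x] assms
  by (simp add: sums_iff)

lemma psi2_norm_le_imp_moment_le:
  assumes "psi2_norm M U \<le> ereal K" and "1 \<le> m"
  shows "integrable M (\<lambda>x. \<bar>U x\<bar> ^ m)"
    and "integral\<^sup>L M (\<lambda>x. \<bar>U x\<bar> ^ m) \<le> (K * sqrt m) ^ m"
proof -
  let ?J = "integral\<^sup>L M (\<lambda>x. \<bar>U x\<bar> ^ m)"
  let ?term = "if integrable M (\<lambda>x. \<bar>U x\<bar> ^ m) then ereal (?J powr (1 / m) / sqrt m) else \<infinity>"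
  have "?term \<le> psi2_norm M U"
    unfolding psi2_norm_def using \<open>1 \<le> m\<close> by (intro SUP_upper) simp
  then have term_le: "?term \<le> ereal K"
    using assms(1) by (rule order.trans)
  then show integrable: "integrable M (\<lambda>x. \<bar>U x\<bar> ^ m)"
    by (cases "integrable M (\<lambda>x. \<bar>U x\<bar> ^ m)") simp_all
  have root_le: "?J powr (1 / m) \<le> K * sqrt m"
    using term_le integrable \<open>1 \<le> m\<close> by (simp add: divide_le_eq)
  have "0 \<le> ?J"
    by (intro integral_nonneg_AE) simp
  then have "?J = (?J powr (1 / m)) ^ m"
    using \<open>1 \<le> m\<close> by (cases "?J = 0") (simp_all add: powr_power)
  also have "\<dots> \<le> (K * sqrt m) ^ m"
    by (intro power_mono root_le) simp
  finally show "?J \<le> (K * sqrt m) ^ m" .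
qed

context prob_space
begin

lemma exp_expectation_le_series:
  fixes X :: "'a \<Rightarrow> real"
  assumes [measurable]: "X \<in> borel_measurable M" and X_nonneg: "\<And>x. 0 \<le> X x"
    and integrable_power: "\<And>n. integrable M (\<lambda>x. X x ^ n)"
    and moment_le: "\<And>n. expectation (\<lambda>x. X x ^ n) / fact n \<le> b n"
    and "b sums B"
  shows "integrable M (\<lambda>x. exp (X x))" and "expectation (\<lambda>x. exp (X x)) \<le> B"
proof -
  have b_nonneg: "0 \<le> b n" for n
  proof -
    have "0 \<le> expectation (\<lambda>x. X x ^ n)"
      by (intro integral_nonneg_AE AE_I2 zero_le_power X_nonneg)
    then show ?thesis
      using moment_le[of n] by (meson divide_nonneg_nonneg fact_ge_zero order.trans)
  qed
  have B_nonneg: "0 \<le> B"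
    using \<open>b sums B\<close> b_nonneg by (metis sums_le sums_zero)
  have "(\<integral>\<^sup>+x. ennreal (exp (X x)) \<partial>M) = (\<integral>\<^sup>+x. (\<Sum>n. ennreal (X x ^ n / fact n)) \<partial>M)"
  proof (intro nn_integral_cong)
    fix x
    show "ennreal (exp (X x)) = (\<Sum>n. ennreal (X x ^ n / fact n))"
      using exp_real_sums[of "X x"] X_nonneg[of x]
      by (subst suminf_ennreal2) (auto simp: sums_iff)
  qed
  also have "\<dots> = (\<Sum>n. \<integral>\<^sup>+x. ennreal (X x ^ n / fact n) \<partial>M)"
    by (rule nn_integral_suminf) measurable
  also have "\<dots> = (\<Sum>n. ennreal (expectation (\<lambda>x. X x ^ n / fact n)))"
    using integrable_power X_nonneg
    by (intro suminf_cong nn_integral_eq_integral) auto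
  also have "\<dots> \<le> (\<Sum>n. ennreal (b n))"
    using moment_le by (intro suminf_le ennreal_leI) auto
  also have "\<dots> = ennreal B"
    using \<open>b sums B\<close> b_nonneg by (subst suminf_ennreal2) (auto simp: sums_iff)
  finally have nn_le: "(\<integral>\<^sup>+x. ennreal (exp (X x)) \<partial>M) \<le> ennreal B" .
  then show integrable: "integrable M (\<lambda>x. exp (X x))"
    by (intro integrableI_bounded) (auto intro: le_less_trans)
  show "expectation (\<lambda>x. exp (X x)) \<le> B"
    using nn_le B_nonneg by (subst (asm) nn_integral_eq_integral[OF integrable]) auto
qed

lemma subgaussian_exp_square_le:
  fixes Z :: "'a \<Rightarrow> real"
  assumes [measurable]: "Z \<in> borel_measurable M" and "0 < K"
    and integrable_moment: "\<And>m. integrable M (\<lambda>x. \<bar>Z x\<bar> ^ m)"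
    and moment_le: "\<And>m. expectation (\<lambda>x. \<bar>Z x\<bar> ^ m) \<le> (K * sqrt m) ^ m"
  shows "integrable M (\<lambda>x. exp (Z x ^ 2 / (4 * exp 1 * K ^ 2)))"
    and "expectation (\<lambda>x. exp (Z x ^ 2 / (4 * exp 1 * K ^ 2))) \<le> 2"
proof -
  define c where "c = 4 * exp 1 * K ^ 2"
  have "0 < c" using \<open>0 < K\<close> by (simp add: c_def)
  have power_eq: "(Z x ^ 2 / c) ^ n = \<bar>Z x\<bar> ^ (2 * n) / c ^ n" for x n
    by (simp add: power_mult power_divide)
  have series_term_le: "expectation (\<lambda>x. (Z x ^ 2 / c) ^ n) / fact n \<le> (1 / 2) ^ n" for n
  proof -
    have "expectation (\<lambda>x. (Z x ^ 2 / c) ^ n) / fact n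
        = expectation (\<lambda>x. \<bar>Z x\<bar> ^ (2 * n)) / (c ^ n * fact n)"
      by (simp add: power_eq)
    also have "\<dots> \<le> (K * sqrt (2 * n)) ^ (2 * n) / (c ^ n * fact n)"
      using moment_le[of "2 * n"] \<open>0 < c\<close> by (intro divide_right_mono) auto
    also have "\<dots> = (2 * K ^ 2 / c) ^ n * (real n ^ n / fact n)"
      by (simp add: power_mult power_mult_distrib power_divide)
    also have "\<dots> = (1 / (2 * exp 1)) ^ n * (real n ^ n / fact n)"
      using \<open>0 < K\<close> by (simp add: c_def)
    also have "\<dots> \<le> (1 / (2 * exp 1)) ^ n * exp n"
      by (intro mult_left_mono power_div_fact_le_exp) auto
    also have "\<dots> = (1 / 2) ^ n"
      using exp_of_nat_mult[of n "1::real"] by (simp add: power_divide power_mult_distrib)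
    finally show ?thesis .
  qed
  have half_sums: "(\<lambda>n. (1 / 2) ^ n) sums (2::real)"
    using geometric_sums[of "1 / 2 :: real"] by simp
  have "(\<lambda>x. Z x ^ 2 / c) \<in> borel_measurable M"
    by measurable
  moreover have "0 \<le> Z x ^ 2 / c" for x
    using \<open>0 < c\<close> by simp
  moreover have "integrable M (\<lambda>x. (Z x ^ 2 / c) ^ n)" for n
    using integrable_moment by (simp add: power_eq)
  ultimately show "integrable M (\<lambda>x. exp (Z x ^ 2 / (4 * exp 1 * K ^ 2)))"
    and "expectation (\<lambda>x. exp (Z x ^ 2 / (4 * exp 1 * K ^ 2))) \<le> 2"
    using exp_expectation_le_series[OF _ _ _ series_term_le half_sums] by (simp_all add: c_def)
qed

lemma subgaussian_exp_abs_le: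
  fixes Z :: "'a \<Rightarrow> real"
  assumes [measurable]: "Z \<in> borel_measurable M" and "0 < K"
    and "\<And>m. integrable M (\<lambda>x. \<bar>Z x\<bar> ^ m)"
    and "\<And>m. expectation (\<lambda>x. \<bar>Z x\<bar> ^ m) \<le> (K * sqrt m) ^ m"
    and "0 \<le> s"
  shows "integrable M (\<lambda>x. exp (s * \<bar>Z x\<bar>))"
    and "expectation (\<lambda>x. exp (s * \<bar>Z x\<bar>)) \<le> 2 * exp (exp 1 * K ^ 2 * s ^ 2)"
proof -
  define c where "c = 4 * exp 1 * K ^ 2"
  have "0 < c" using \<open>0 < K\<close> by (simp add: c_def)
  note square = subgaussian_exp_square_le[OF assms(1-4), folded c_def]
  have pointwise: "exp (s * \<bar>Z x\<bar>) \<le> exp (exp 1 * K ^ 2 * s ^ 2) * exp (Z x ^ 2 / c)" for x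
  proof -
    have "2 * (c * s / 2) * \<bar>Z x\<bar> \<le> (c * s / 2) ^ 2 + \<bar>Z x\<bar> ^ 2"
      by (rule sum_squares_bound)
    also have "\<dots> = c * (exp 1 * K ^ 2 * s ^ 2 + Z x ^ 2 / c)"
      using \<open>0 < K\<close> by (simp add: c_def field_simps power2_eq_square)
    finally have "s * \<bar>Z x\<bar> \<le> exp 1 * K ^ 2 * s ^ 2 + Z x ^ 2 / c"
      using \<open>0 < c\<close> by (simp add: mult.assoc)
    then show ?thesis by (simp flip: exp_add)
  qed
  have majorant: "integrable M (\<lambda>x. exp (exp 1 * K ^ 2 * s ^ 2) * exp (Z x ^ 2 / c))"
    using square(1) by simp
  show integrable: "integrable M (\<lambda>x. exp (s * \<bar>Z x\<bar>))"
    by (rule Bochner_Integration.integrable_bound[OF majorant]) (auto intro: pointwise)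
  have "expectation (\<lambda>x. exp (s * \<bar>Z x\<bar>)) \<le> expectation (\<lambda>x. exp (exp 1 * K ^ 2 * s ^ 2) * exp (Z x ^ 2 / c))"
    by (rule integral_mono[OF integrable majorant pointwise])
  also have "\<dots> \<le> exp (exp 1 * K ^ 2 * s ^ 2) * 2"
    using square(2) by simp
  finally show "expectation (\<lambda>x. exp (s * \<bar>Z x\<bar>)) \<le> 2 * exp (exp 1 * K ^ 2 * s ^ 2)"
    by (simp add: mult.commute)
qed

end

lemma quadratic_nonneg_imp_linear_coeff_zero:
  fixes b c :: real
  assumes nonneg: "\<And>t. 0 \<le> 2 * t * b + t ^ 2 * c" and "0 \<le> c"
  shows "b = 0"
proof -
  define t where "t = - b / (c + 1)"
  have "0 \<le> (c + 1) ^ 2 * (2 * t * b + t ^ 2 * c)"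
    using nonneg[of t] by simp
  also have "\<dots> = - (b ^ 2 * (c + 2))"
  proof -
    have "t * (c + 1) = - b"
      using \<open>0 \<le> c\<close> by (simp add: t_def)
    moreover have "(c + 1) ^ 2 * (2 * t * b + t ^ 2 * c) = 2 * b * (t * (c + 1)) * (c + 1) + (t * (c + 1)) ^ 2 * c"
      by algebra
    ultimately show ?thesis
      by algebra
  qed
  finally show ?thesis
    using \<open>0 \<le> c\<close> by (simp add: mult_le_0_iff)
qed

lemma symmetric_matrix_inner_comm:
  fixes A :: "real ^ 'n ^ 'n"
  assumes "transpose A = A"
  shows "x \<bullet> (A *v y) = y \<bullet> (A *v x)"
  by (metis assms dot_lmul_matrix inner_commute vector_transpose_matrix)

lemma quadratic_form_minimiser_is_eigenvector:
  fixes A :: "real ^ 'n ^ 'n"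
  assumes "transpose A = A"
    and lower: "\<And>y. \<mu> * (norm y)\<^sup>2 \<le> y \<bullet> (A *v y)"
    and "norm u = 1" and "u \<bullet> (A *v u) = \<mu>"
  shows "A *v u = \<mu> *\<^sub>R u"
proof -
  define w where "w = A *v u - \<mu> *\<^sub>R u"
  define gap where "gap y = y \<bullet> (A *v y) - \<mu> * (norm y)\<^sup>2" for y
  have "u \<bullet> u = 1"
    using \<open>norm u = 1\<close> by (simp add: norm_eq_1)
  have "gap (u + t *\<^sub>R w) = 2 * t * (w \<bullet> w) + t\<^sup>2 * gap w" for t
  proof -
    have quadratic: "(u + t *\<^sub>R w) \<bullet> (A *v (u + t *\<^sub>R w))
        = \<mu> + 2 * t * (w \<bullet> (A *v u)) + t\<^sup>2 * (w \<bullet> (A *v w))"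
      using symmetric_matrix_inner_comm[OF assms(1), of u w] \<open>u \<bullet> (A *v u) = \<mu>\<close>
      by (simp add: power2_eq_square algebra_simps)
    have norm: "(norm (u + t *\<^sub>R w))\<^sup>2 = 1 + 2 * t * (w \<bullet> u) + t\<^sup>2 * (w \<bullet> w)"
      using \<open>u \<bullet> u = 1\<close> unfolding power2_norm_eq_inner
      by (simp add: inner_commute power2_eq_square algebra_simps)
    have w_inner: "w \<bullet> w = w \<bullet> (A *v u) - \<mu> * (w \<bullet> u)"
      by (subst (2) w_def) (simp add: inner_diff_right)
    show ?thesis
      unfolding gap_def quadratic norm unfolding power2_norm_eq_inner w_inner
      by (simp add: algebra_simps)
  qed
  moreover have "0 \<le> gap y" for y
    using lower[of y] by (simp add: gap_def)
  ultimately have "w \<bullet> w = 0"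
    by (intro quadratic_nonneg_imp_linear_coeff_zero[where c = "gap w"]) metis+
  then show ?thesis
    by (simp add: w_def)
qed

lemma lambda_min_mult_norm_le_quadratic_form:
  fixes A :: "real ^ 'n ^ 'n"
  assumes "transpose A = A"
  shows "lambda_min A * (norm v)\<^sup>2 \<le> v \<bullet> (A *v v)"
proof -
  define Q where "Q y = y \<bullet> (A *v y)" for y
  have "continuous_on (sphere 0 1) Q"
    unfolding Q_def by (intro continuous_intros linear_continuous_on matrix_vector_mul_linear)
  moreover have "sphere (0 :: real ^ 'n) 1 \<noteq> {}"
    using vector_choose_size[of 1] by auto
  ultimately obtain u where u: "u \<in> sphere 0 1" and u_min: "\<And>y. y \<in> sphere 0 1 \<Longrightarrow> Q u \<le> Q y"
    using continuous_attains_inf[OF compact_sphere] by blast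
  have homogeneous: "Q (c *\<^sub>R y) = c\<^sup>2 * Q y" for c y
    by (simp add: Q_def matrix_vector_mult_scaleR power2_eq_square)
  have lower: "Q u * (norm y)\<^sup>2 \<le> Q y" for y
  proof (cases "y = 0")
    case False
    have "Q u \<le> Q ((1 / norm y) *\<^sub>R y)"
      using False by (intro u_min) simp
    with False show ?thesis
      by (simp add: homogeneous field_simps)
  qed (simp add: Q_def)
  have eigen: "A *v u = Q u *\<^sub>R u"
    using assms lower u by (intro quadratic_form_minimiser_is_eigenvector) (simp_all add: Q_def)
  have eigenvalues_bounded: "Q u \<le> c" if "y \<noteq> 0" "A *v y = c *\<^sub>R y" for c y
  proof -
    have "Q u * (norm y)\<^sup>2 \<le> c * (norm y)\<^sup>2"
      using lower[of y] that by (simp add: Q_def power2_norm_eq_inner)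
    with \<open>y \<noteq> 0\<close> show ?thesis by simp
  qed
  \<comment> \<open>the eigenvalue set is nonempty and bounded below, so its \<open>Inf\<close> is not a junk value\<close>
  have "lambda_min A \<le> Q u"
    unfolding lambda_min_def using eigen u eigenvalues_bounded
    by (intro cInf_lower bdd_belowI) (auto intro!: exI[of _ u])
  then have "lambda_min A * (norm v)\<^sup>2 \<le> Q u * (norm v)\<^sup>2"
    by (simp add: mult_right_mono)
  also have "\<dots> \<le> Q v"
    by (rule lower)
  finally show ?thesis
    by (simp add: Q_def)
qed

lemma transpose_second_moment: "transpose (second_moment M W) = second_moment M W"
  by (simp add: transpose_def second_moment_def mult.commute)

lemma second_moment_quadratic_form:
  fixes W :: "'a \<Rightarrow> real ^ 'p"
  assumes [measurable]: "W \<in> borel_measurable M"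
    and square_integrable: "\<And>i. integrable M (\<lambda>x. (W x $ i)\<^sup>2)"
  shows "v \<bullet> (second_moment M W *v v) = integral\<^sup>L M (\<lambda>x. (W x \<bullet> v)\<^sup>2)"
proof -
  have [measurable]: "(\<lambda>x. W x $ i) \<in> borel_measurable M" for i
    using measurable_compose[OF assms(1) borel_measurable_nth] by simp
  have "integrable M (\<lambda>x. W x $ i * W x $ j)" for i j
  proof (rule Bochner_Integration.integrable_bound)
    show "integrable M (\<lambda>x. (W x $ i)\<^sup>2 + (W x $ j)\<^sup>2)"
      using square_integrable by simp
    show "AE x in M. norm (W x $ i * W x $ j) \<le> norm ((W x $ i)\<^sup>2 + (W x $ j)\<^sup>2)"
    proof (intro AE_I2)
      fix x
      have "2 * \<bar>W x $ i\<bar> * \<bar>W x $ j\<bar> \<le> \<bar>W x $ i\<bar>\<^sup>2 + \<bar>W x $ j\<bar>\<^sup>2"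
        by (rule sum_squares_bound)
      moreover have "0 \<le> \<bar>W x $ i\<bar> * \<bar>W x $ j\<bar>"
        by simp
      ultimately have "\<bar>W x $ i\<bar> * \<bar>W x $ j\<bar> \<le> \<bar>W x $ i\<bar>\<^sup>2 + \<bar>W x $ j\<bar>\<^sup>2"
        by linarith
      then show "norm (W x $ i * W x $ j) \<le> norm ((W x $ i)\<^sup>2 + (W x $ j)\<^sup>2)"
        by (simp add: abs_mult)
    qed
  qed measurable
  then have "v \<bullet> (second_moment M W *v v)
      = integral\<^sup>L M (\<lambda>x. \<Sum>i\<in>UNIV. \<Sum>j\<in>UNIV. v $ i * v $ j * (W x $ i * W x $ j))"
    by (simp add: second_moment_def inner_vec_def matrix_vector_mult_def sum_distrib_left
        mult_ac)
  also have "\<dots> = integral\<^sup>L M (\<lambda>x. (W x \<bullet> v)\<^sup>2)"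
    by (simp add: inner_vec_def power2_eq_square sum_product algebra_simps)
  finally show ?thesis .
qed

lemma exp_lipschitz_isCont:
  fixes f :: "real \<Rightarrow> real"
  assumes lipschitz: "\<And>u v. \<bar>f u - f v\<bar> \<le> K * exp (K * (\<bar>u\<bar> + \<bar>v\<bar>)) * \<bar>u - v\<bar>"
  shows "isCont f x"
proof -
  have "((\<lambda>y. K * exp (K * (\<bar>y\<bar> + \<bar>x\<bar>)) * \<bar>y - x\<bar>)
      \<longlongrightarrow> K * exp (K * (\<bar>x\<bar> + \<bar>x\<bar>)) * \<bar>x - x\<bar>) (at x)"
    by (intro tendsto_intros)
  then have "((\<lambda>y. K * exp (K * (\<bar>y\<bar> + \<bar>x\<bar>)) * \<bar>y - x\<bar>) \<longlongrightarrow> 0) (at x)"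
    by simp
  moreover have "\<forall>\<^sub>F y in at x. norm (f y - f x) \<le> K * exp (K * (\<bar>y\<bar> + \<bar>x\<bar>)) * \<bar>y - x\<bar>"
    using lipschitz by (simp add: always_eventually)
  ultimately have "((\<lambda>y. f y - f x) \<longlongrightarrow> 0) (at x)"
    by (rule Lim_null_comparison[rotated])
  then show ?thesis
    unfolding isCont_def by (rule LIM_zero_cancel)
qed

lemma borel_measurable_exp_lipschitz:
  fixes f :: "real \<Rightarrow> real"
  assumes "\<And>u v. \<bar>f u - f v\<bar> \<le> K * exp (K * (\<bar>u\<bar> + \<bar>v\<bar>)) * \<bar>u - v\<bar>"
  shows "f \<in> borel_measurable borel"
  using exp_lipschitz_isCont[OF assms]
  by (intro borel_measurable_continuous_onI continuous_at_imp_continuous_on) auto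

lemma exp_lipschitz_increment_power_le:
  fixes f :: "real \<Rightarrow> real"
  assumes lipschitz: "\<And>u v. \<bar>f u - f v\<bar> \<le> K * exp (K * (\<bar>u\<bar> + \<bar>v\<bar>)) * \<bar>u - v\<bar>"
    and "0 \<le> K" and "0 < t"
  shows "\<bar>f (u + d) - f u\<bar> ^ l
    \<le> K ^ l * (t / 4 * (exp (8 * real l * K * \<bar>u\<bar>) + exp (4 * real l * K * \<bar>d\<bar>)) + \<bar>d\<bar> ^ (2 * l) / (2 * t))"
proof -
  define a where "a = exp (real l * K * (2 * \<bar>u\<bar> + \<bar>d\<bar>))"
  have "\<bar>f (u + d) - f u\<bar> \<le> K * exp (K * (\<bar>u + d\<bar> + \<bar>u\<bar>)) * \<bar>d\<bar>"
    using lipschitz[of "u + d" u] by simp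
  also have "\<dots> \<le> K * exp (K * (2 * \<bar>u\<bar> + \<bar>d\<bar>)) * \<bar>d\<bar>"
    using \<open>0 \<le> K\<close> abs_triangle_ineq[of u d]
    by (intro mult_right_mono mult_left_mono exp_mono) auto
  finally have "\<bar>f (u + d) - f u\<bar> ^ l \<le> (K * exp (K * (2 * \<bar>u\<bar> + \<bar>d\<bar>)) * \<bar>d\<bar>) ^ l"
    by (intro power_mono) auto
  also have "\<dots> = K ^ l * (a * \<bar>d\<bar> ^ l)"
    by (simp add: a_def power_mult_distrib mult.assoc flip: exp_of_nat_mult)
  also have "\<dots> \<le> K ^ l * (t / 2 * a\<^sup>2 + \<bar>d\<bar> ^ (2 * l) / (2 * t))"
  proof -
    have "2 * (t * a) * \<bar>d\<bar> ^ l \<le> (t * a)\<^sup>2 + (\<bar>d\<bar> ^ l)\<^sup>2"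
      by (rule sum_squares_bound)
    then have "a * \<bar>d\<bar> ^ l \<le> t / 2 * a\<^sup>2 + \<bar>d\<bar> ^ (2 * l) / (2 * t)"
      using \<open>0 < t\<close> by (simp add: field_simps power2_eq_square power_mult)
    then show ?thesis
      using \<open>0 \<le> K\<close> by (intro mult_left_mono) auto
  qed
  also have "\<dots> \<le> K ^ l * (t / 4 * (exp (8 * real l * K * \<bar>u\<bar>) + exp (4 * real l * K * \<bar>d\<bar>)) + \<bar>d\<bar> ^ (2 * l) / (2 * t))"
  proof -
    have "2 * exp (4 * real l * K * \<bar>u\<bar>) * exp (2 * real l * K * \<bar>d\<bar>)
        \<le> (exp (4 * real l * K * \<bar>u\<bar>))\<^sup>2 + (exp (2 * real l * K * \<bar>d\<bar>))\<^sup>2"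
      by (rule sum_squares_bound)
    then have "a\<^sup>2 \<le> (exp (8 * real l * K * \<bar>u\<bar>) + exp (4 * real l * K * \<bar>d\<bar>)) / 2"
      by (simp add: a_def power2_eq_square algebra_simps flip: exp_add)
    then show ?thesis
      using \<open>0 \<le> K\<close> \<open>0 < t\<close> by (intro mult_left_mono add_right_mono) auto
  qed
  finally show ?thesis .
qed

definition increment_moment_bound :: "real \<Rightarrow> real \<Rightarrow> real \<Rightarrow> real \<Rightarrow> real \<Rightarrow> real" where
  "increment_moment_bound a b l k K =
    K * (exp (64 * exp 1 * K ^ 4 * l\<^sup>2 * (a\<^sup>2 + b\<^sup>2)) + (2 * l * K\<^sup>2) powr l / 2) powr (1 / l) / sqrt k"

lemma increment_moment_bound_nonneg: "0 \<le> k \<Longrightarrow> 0 \<le> K \<Longrightarrow> 0 \<le> increment_moment_bound a b l k K"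
  by (simp add: increment_moment_bound_def)

lemma increment_moment_bound_mono:
  assumes "0 \<le> a" "a \<le> a'" "0 \<le> b" "b \<le> b'" "0 \<le> l" "0 \<le> k" "0 \<le> K"
  shows "increment_moment_bound a b l k K \<le> increment_moment_bound a' b' l k K"
proof -
  have "a\<^sup>2 + b\<^sup>2 \<le> a'\<^sup>2 + b'\<^sup>2"
    using assms by (intro add_mono power_mono) auto
  then have "64 * exp 1 * K ^ 4 * l\<^sup>2 * (a\<^sup>2 + b\<^sup>2) \<le> 64 * exp 1 * K ^ 4 * l\<^sup>2 * (a'\<^sup>2 + b'\<^sup>2)"
    by (intro mult_left_mono) auto
  then show ?thesis
    unfolding increment_moment_bound_def using assms
    by (intro divide_right_mono mult_left_mono powr_mono2 add_right_mono) auto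
qed

locale subgaussian_vector = prob_space M for M :: "'a measure" +
  fixes W :: "'a \<Rightarrow> real ^ 'p" and K :: real
  assumes measurable_W [measurable]: "W \<in> borel_measurable M"
    and K_pos: "0 < K"
    and psi2_norm_le: "norm u = 1 \<Longrightarrow> psi2_norm M (\<lambda>x. u \<bullet> W x) \<le> ereal K"
begin

lemma
  shows integrable_moment: "integrable M (\<lambda>x. \<bar>v \<bullet> W x\<bar> ^ m)"
    and moment_le: "expectation (\<lambda>x. \<bar>v \<bullet> W x\<bar> ^ m) \<le> (K * norm v * sqrt m) ^ m"
proof -
  have "integrable M (\<lambda>x. \<bar>v \<bullet> W x\<bar> ^ m) \<and>
      expectation (\<lambda>x. \<bar>v \<bullet> W x\<bar> ^ m) \<le> (K * norm v * sqrt m) ^ m"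
  proof (cases "m = 0 \<or> v = 0")
    case True
    then show ?thesis by (auto simp: prob_space)
  next
    case False
    define u where "u = v /\<^sub>R norm v"
    have "norm u = 1"
      using False by (simp add: u_def)
    have "\<bar>v \<bullet> W x\<bar> = norm v * \<bar>u \<bullet> W x\<bar>" for x
      using False by (simp add: u_def abs_mult)
    then have v_eq: "\<bar>v \<bullet> W x\<bar> ^ m = norm v ^ m * \<bar>u \<bullet> W x\<bar> ^ m" for x
      by (simp add: power_mult_distrib)
    note moment_u = psi2_norm_le_imp_moment_le[OF psi2_norm_le[OF \<open>norm u = 1\<close>]]
    have "expectation (\<lambda>x. \<bar>v \<bullet> W x\<bar> ^ m) = norm v ^ m * expectation (\<lambda>x. \<bar>u \<bullet> W x\<bar> ^ m)"
      by (simp add: v_eq)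
    also have "\<dots> \<le> norm v ^ m * (K * sqrt m) ^ m"
      using False moment_u(2) by (intro mult_left_mono) auto
    finally show ?thesis
      using False moment_u(1) by (simp add: v_eq power_mult_distrib mult_ac)
  qed
  then show "integrable M (\<lambda>x. \<bar>v \<bullet> W x\<bar> ^ m)"
    and "expectation (\<lambda>x. \<bar>v \<bullet> W x\<bar> ^ m) \<le> (K * norm v * sqrt m) ^ m"
    by simp_all
qed

lemma
  assumes "0 \<le> s"
  shows integrable_exp_abs: "integrable M (\<lambda>x. exp (s * \<bar>v \<bullet> W x\<bar>))"
    and exp_abs_le: "expectation (\<lambda>x. exp (s * \<bar>v \<bullet> W x\<bar>)) \<le> 2 * exp (exp 1 * K\<^sup>2 * s\<^sup>2 * (norm v)\<^sup>2)"
proof -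
  have "integrable M (\<lambda>x. exp (s * \<bar>v \<bullet> W x\<bar>)) \<and>
      expectation (\<lambda>x. exp (s * \<bar>v \<bullet> W x\<bar>)) \<le> 2 * exp (exp 1 * K\<^sup>2 * s\<^sup>2 * (norm v)\<^sup>2)"
  proof (cases "v = 0")
    case True
    then show ?thesis by (simp add: prob_space)
  next
    case False
    then have "0 < K * norm v"
      using K_pos by simp
    from subgaussian_exp_abs_le[OF _ this integrable_moment moment_le \<open>0 \<le> s\<close>]
    show ?thesis
      by (simp add: power_mult_distrib mult_ac)
  qed
  then show "integrable M (\<lambda>x. exp (s * \<bar>v \<bullet> W x\<bar>))"
    and "expectation (\<lambda>x. exp (s * \<bar>v \<bullet> W x\<bar>)) \<le> 2 * exp (exp 1 * K\<^sup>2 * s\<^sup>2 * (norm v)\<^sup>2)"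
    by simp_all
qed

lemma norm_le_second_moment:
  assumes "0 < k" and "k \<le> lambda_min (second_moment M W)"
  shows "norm v \<le> sqrt (expectation (\<lambda>x. (W x \<bullet> v)\<^sup>2)) / sqrt k"
proof -
  have "axis i 1 \<bullet> W x = W x $ i" for i x
    by (simp add: cart_eq_inner_axis inner_commute)
  then have "integrable M (\<lambda>x. (W x $ i)\<^sup>2)" for i
    using integrable_moment[of "axis i 1" 2] by simp
  then have "k * (norm v)\<^sup>2 \<le> expectation (\<lambda>x. (W x \<bullet> v)\<^sup>2)"
    using assms(2) lambda_min_mult_norm_le_quadratic_form[OF transpose_second_moment, of M W v]
    by (simp add: second_moment_quadratic_form order_trans[OF mult_right_mono])
  then have "sqrt k * norm v \<le> sqrt (expectation (\<lambda>x. (W x \<bullet> v)\<^sup>2))"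
    by (metis abs_norm_cancel real_sqrt_abs real_sqrt_le_mono real_sqrt_mult)
  with \<open>0 < k\<close> show ?thesis
    by (simp add: field_simps)
qed

lemma even_moment_le:
  "expectation (\<lambda>x. \<bar>v \<bullet> W x\<bar> ^ (2 * m)) \<le> (norm v ^ m)\<^sup>2 * (2 * real m * K\<^sup>2) ^ m"
proof -
  have "(K * norm v * sqrt (real (2 * m))) ^ (2 * m) = ((K * norm v * sqrt (real (2 * m)))\<^sup>2) ^ m"
    by (rule power_mult)
  also have "\<dots> = (norm v ^ m)\<^sup>2 * (2 * real m * K\<^sup>2) ^ m"
    by (simp add: power_mult_distrib mult_ac flip: power_mult)
  finally show ?thesis
    using moment_le[of v "2 * m"] by simp
qed

context
  fixes f :: "real \<Rightarrow> real"
  assumes lipschitz: "\<And>u v. \<bar>f u - f v\<bar> \<le> K * exp (K * (\<bar>u\<bar> + \<bar>v\<bar>)) * \<bar>u - v\<bar>"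
begin

lemma integrable_increment_power:
  "integrable M (\<lambda>x. \<bar>f ((\<theta> + \<Delta>) \<bullet> W x) - f (\<theta> \<bullet> W x)\<bar> ^ l)"
proof -
  have [measurable]: "f \<in> borel_measurable borel"
    by (rule borel_measurable_exp_lipschitz[OF lipschitz])
  have "0 \<le> 8 * real l * K" "0 \<le> 4 * real l * K"
    using K_pos by simp_all
  then have majorant: "integrable M (\<lambda>x. K ^ l * ((exp (8 * real l * K * \<bar>\<theta> \<bullet> W x\<bar>)
      + exp (4 * real l * K * \<bar>\<Delta> \<bullet> W x\<bar>)) / 4 + \<bar>\<Delta> \<bullet> W x\<bar> ^ (2 * l) / 2))"
    using integrable_exp_abs integrable_moment by simp
  have pointwise: "norm (\<bar>f ((\<theta> + \<Delta>) \<bullet> W x) - f (\<theta> \<bullet> W x)\<bar> ^ l)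
      \<le> norm (K ^ l * ((exp (8 * real l * K * \<bar>\<theta> \<bullet> W x\<bar>)
      + exp (4 * real l * K * \<bar>\<Delta> \<bullet> W x\<bar>)) / 4 + \<bar>\<Delta> \<bullet> W x\<bar> ^ (2 * l) / 2))" for x
    using exp_lipschitz_increment_power_le[OF lipschitz less_imp_le[OF K_pos], of 1 "\<theta> \<bullet> W x" "\<Delta> \<bullet> W x" l]
    by (auto simp: inner_add_left intro: order_trans[OF _ abs_ge_self])
  show ?thesis
    by (rule Bochner_Integration.integrable_bound[OF majorant]) (measurable, rule AE_I2, rule pointwise)
qed

lemma increment_moment_le_exp_moments:
  assumes "0 < t"
  shows "expectation (\<lambda>x. \<bar>f ((\<theta> + \<Delta>) \<bullet> W x) - f (\<theta> \<bullet> W x)\<bar> ^ l)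
    \<le> K ^ l * (t / 4 * (expectation (\<lambda>x. exp (8 * real l * K * \<bar>\<theta> \<bullet> W x\<bar>))
        + expectation (\<lambda>x. exp (4 * real l * K * \<bar>\<Delta> \<bullet> W x\<bar>)))
      + expectation (\<lambda>x. \<bar>\<Delta> \<bullet> W x\<bar> ^ (2 * l)) / (2 * t))"
proof -
  have "0 \<le> 8 * real l * K" "0 \<le> 4 * real l * K"
    using K_pos by simp_all
  note integrable = integrable_exp_abs[OF this(1)] integrable_exp_abs[OF this(2)] integrable_moment
  have "expectation (\<lambda>x. \<bar>f ((\<theta> + \<Delta>) \<bullet> W x) - f (\<theta> \<bullet> W x)\<bar> ^ l)
      \<le> expectation (\<lambda>x. K ^ l * (t / 4 * (exp (8 * real l * K * \<bar>\<theta> \<bullet> W x\<bar>)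
        + exp (4 * real l * K * \<bar>\<Delta> \<bullet> W x\<bar>)) + \<bar>\<Delta> \<bullet> W x\<bar> ^ (2 * l) / (2 * t)))"
    using integrable_increment_power integrable
      exp_lipschitz_increment_power_le[OF lipschitz less_imp_le[OF K_pos] \<open>0 < t\<close>]
    by (intro integral_mono) (simp_all add: inner_add_left)
  also have "\<dots> = K ^ l * (t / 4 * (expectation (\<lambda>x. exp (8 * real l * K * \<bar>\<theta> \<bullet> W x\<bar>))
        + expectation (\<lambda>x. exp (4 * real l * K * \<bar>\<Delta> \<bullet> W x\<bar>)))
      + expectation (\<lambda>x. \<bar>\<Delta> \<bullet> W x\<bar> ^ (2 * l)) / (2 * t))"
    using integrable by simp
  finally show ?thesis .
qed

lemma increment_moment_le:
  assumes "1 \<le> l"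
  shows "expectation (\<lambda>x. \<bar>f ((\<theta> + \<Delta>) \<bullet> W x) - f (\<theta> \<bullet> W x)\<bar> ^ l)
    \<le> (K * norm \<Delta>) ^ l * (exp (64 * exp 1 * K ^ 4 * (real l)\<^sup>2 * ((norm \<theta>)\<^sup>2 + (norm \<Delta>)\<^sup>2))
        + (2 * real l * K\<^sup>2) ^ l / 2)"
proof (cases "\<Delta> = 0")
  case True
  then show ?thesis
    using \<open>1 \<le> l\<close> by (simp add: zero_power)
next
  case False
  define A where "A = exp (64 * exp 1 * K ^ 4 * (real l)\<^sup>2 * ((norm \<theta>)\<^sup>2 + (norm \<Delta>)\<^sup>2))"
  \<comment> \<open>AM-GM weight: makes both halves of the pointwise bound of order \<open>norm \<Delta> ^ l\<close> in mean\<close>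
  define t where "t = norm \<Delta> ^ l"
  have "0 < t"
    using False by (simp add: t_def)
  have exp_le_A: "expectation (\<lambda>x. exp (s * \<bar>v \<bullet> W x\<bar>)) \<le> 2 * A"
    if "0 \<le> s"
      and "exp 1 * K\<^sup>2 * s\<^sup>2 * (norm v)\<^sup>2 \<le> 64 * exp 1 * K ^ 4 * (real l)\<^sup>2 * ((norm \<theta>)\<^sup>2 + (norm \<Delta>)\<^sup>2)"
    for s v
    using exp_abs_le[OF that(1), of v] exp_le_cancel_iff[THEN iffD2, OF that(2)]
    unfolding A_def by linarith
  have "expectation (\<lambda>x. exp (8 * real l * K * \<bar>\<theta> \<bullet> W x\<bar>)) \<le> 2 * A"
    using K_pos by (intro exp_le_A) (simp_all add: field_simps)
  moreover have "expectation (\<lambda>x. exp (4 * real l * K * \<bar>\<Delta> \<bullet> W x\<bar>)) \<le> 2 * A"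
    using K_pos by (intro exp_le_A) (simp_all add: field_simps)
  moreover note even_moment_le[of \<Delta> l, folded t_def]
  ultimately have "K ^ l * (t / 4 * (expectation (\<lambda>x. exp (8 * real l * K * \<bar>\<theta> \<bullet> W x\<bar>))
        + expectation (\<lambda>x. exp (4 * real l * K * \<bar>\<Delta> \<bullet> W x\<bar>)))
      + expectation (\<lambda>x. \<bar>\<Delta> \<bullet> W x\<bar> ^ (2 * l)) / (2 * t))
    \<le> K ^ l * (t / 4 * (2 * A + 2 * A) + t\<^sup>2 * (2 * real l * K\<^sup>2) ^ l / (2 * t))"
    using K_pos \<open>0 < t\<close> by (intro mult_left_mono add_mono divide_right_mono) auto
  with increment_moment_le_exp_moments[OF \<open>0 < t\<close>]
  have "expectation (\<lambda>x. \<bar>f ((\<theta> + \<Delta>) \<bullet> W x) - f (\<theta> \<bullet> W x)\<bar> ^ l)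
      \<le> K ^ l * (t / 4 * (2 * A + 2 * A) + t\<^sup>2 * (2 * real l * K\<^sup>2) ^ l / (2 * t))"
    by (rule order_trans)
  also have "\<dots> = (K * norm \<Delta>) ^ l * (A + (2 * real l * K\<^sup>2) ^ l / 2)"
    using \<open>0 < t\<close> by (simp add: t_def power2_eq_square field_simps)
  finally show ?thesis
    by (simp add: A_def)
qed

lemma increment_Lp_norm_le:
  assumes "1 \<le> l" and "0 < k" and "k \<le> lambda_min (second_moment M W)"
  shows "expectation (\<lambda>x. \<bar>f ((\<theta> + \<Delta>) \<bullet> W x) - f (\<theta> \<bullet> W x)\<bar> ^ l) powr (1 / l)
    \<le> increment_moment_bound (norm \<theta>) (norm \<Delta>) l k K * sqrt (expectation (\<lambda>x. (W x \<bullet> \<Delta>)\<^sup>2))"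
proof -
  define X where "X = exp (64 * exp 1 * K ^ 4 * (real l)\<^sup>2 * ((norm \<theta>)\<^sup>2 + (norm \<Delta>)\<^sup>2))
    + (2 * real l * K\<^sup>2) ^ l / 2"
  have "0 \<le> X"
    by (simp add: X_def)
  have root_power: "(y ^ l) powr (1 / l) = y" if "0 \<le> y" for y :: real
    using that \<open>1 \<le> l\<close> by (cases "y = 0") (simp_all add: powr_realpow [symmetric] powr_powr)
  have "expectation (\<lambda>x. \<bar>f ((\<theta> + \<Delta>) \<bullet> W x) - f (\<theta> \<bullet> W x)\<bar> ^ l) powr (1 / l)
      \<le> ((K * norm \<Delta>) ^ l * X) powr (1 / l)"
    using increment_moment_le[OF \<open>1 \<le> l\<close>, of \<theta> \<Delta>]
    by (intro powr_mono2) (auto simp: X_def)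
  also have "\<dots> = K * norm \<Delta> * X powr (1 / l)"
    using K_pos \<open>0 \<le> X\<close> by (simp add: powr_mult root_power)
  also have "\<dots> \<le> K * (sqrt (expectation (\<lambda>x. (W x \<bullet> \<Delta>)\<^sup>2)) / sqrt k) * X powr (1 / l)"
    using norm_le_second_moment[OF \<open>0 < k\<close> \<open>k \<le> lambda_min (second_moment M W)\<close>] K_pos
    by (intro mult_right_mono mult_left_mono) auto
  also have "\<dots> = increment_moment_bound (norm \<theta>) (norm \<Delta>) l k K * sqrt (expectation (\<lambda>x. (W x \<bullet> \<Delta>)\<^sup>2))"
    using K_pos \<open>1 \<le> l\<close>
    by (simp add: increment_moment_bound_def X_def powr_realpow)
  finally show ?thesis .
qed


end

end

theorem lemma12:
  fixes M :: "'a measure" and W :: "'a \<Rightarrow> real ^ 'p"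
    and f :: "real \<Rightarrow> real" and k K :: real
  assumes "prob_space M"
    and "W \<in> borel_measurable M"
    and "k > 0" and "K > 0"
    and "k \<le> lambda_min (second_moment M W)"
    and "(SUP \<Delta>\<in>{\<Delta>. norm \<Delta> = 1}. psi2_norm M (\<lambda>x. \<Delta> \<bullet> W x)) \<le> ereal K"
    and "\<And>u v. \<bar>f u - f v\<bar> \<le> K * exp (K * (\<bar>u\<bar> + \<bar>v\<bar>)) * \<bar>u - v\<bar>"
  shows "\<exists>B1 :: real \<Rightarrow> real \<Rightarrow> real \<Rightarrow> real \<Rightarrow> real \<Rightarrow> real.
    (\<forall>a b c d e. 0 \<le> a \<longrightarrow> 0 \<le> b \<longrightarrow> 0 \<le> c \<longrightarrow> 0 \<le> d \<longrightarrow> 0 \<le> e \<longrightarrow>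
        0 \<le> B1 a b c d e) \<and>
    (\<forall>a a' b c d e. 0 \<le> a \<longrightarrow> a \<le> a' \<longrightarrow> 0 \<le> b \<longrightarrow> 0 \<le> c \<longrightarrow> 0 \<le> d \<longrightarrow> 0 \<le> e \<longrightarrow>
        B1 a b c d e \<le> B1 a' b c d e) \<and>
    (\<forall>a b b' c d e. 0 \<le> a \<longrightarrow> 0 \<le> b \<longrightarrow> b \<le> b' \<longrightarrow> 0 \<le> c \<longrightarrow> 0 \<le> d \<longrightarrow> 0 \<le> e \<longrightarrow>
        B1 a b c d e \<le> B1 a b' c d e) \<and>
    (\<forall>l::nat. \<forall>\<theta> \<Delta> :: real ^ 'p. l \<ge> 1 \<longrightarrow>
        integrable M (\<lambda>x. \<bar>f ((\<theta> + \<Delta>) \<bullet> W x) - f (\<theta> \<bullet> W x)\<bar> ^ l) \<and>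
        (integral\<^sup>L M (\<lambda>x. \<bar>f ((\<theta> + \<Delta>) \<bullet> W x) - f (\<theta> \<bullet> W x)\<bar> ^ l)) powr (1 / real l)
          \<le> B1 (norm \<theta>) (norm \<Delta>) (real l) k K
             * sqrt (integral\<^sup>L M (\<lambda>x. (W x \<bullet> \<Delta>)\<^sup>2)))"
proof -
  have "psi2_norm M (\<lambda>x. u \<bullet> W x) \<le> ereal K" if "norm u = 1" for u :: "real ^ 'p"
  proof -
    have "psi2_norm M (\<lambda>x. u \<bullet> W x) \<le> (SUP \<Delta>\<in>{\<Delta>. norm \<Delta> = 1}. psi2_norm M (\<lambda>x. \<Delta> \<bullet> W x))"
      using that by (intro SUP_upper) simp
    then show ?thesis
      using assms(6) by (rule order.trans)
  qed
  then interpret subgaussian_vector M W K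
    using assms(1,2,4) by (simp add: subgaussian_vector_def subgaussian_vector_axioms_def)
  show ?thesis
  proof (intro exI[of _ increment_moment_bound] conjI allI impI)
    fix l :: nat and \<theta> \<Delta> :: "real ^ 'p"
    assume "1 \<le> l"
    show "integrable M (\<lambda>x. \<bar>f ((\<theta> + \<Delta>) \<bullet> W x) - f (\<theta> \<bullet> W x)\<bar> ^ l)"
      using integrable_increment_power[OF assms(7)] .
    show "(integral\<^sup>L M (\<lambda>x. \<bar>f ((\<theta> + \<Delta>) \<bullet> W x) - f (\<theta> \<bullet> W x)\<bar> ^ l)) powr (1 / real l)
        \<le> increment_moment_bound (norm \<theta>) (norm \<Delta>) (real l) k K * sqrt (integral\<^sup>L M (\<lambda>x. (W x \<bullet> \<Delta>)\<^sup>2))"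
      using increment_Lp_norm_le[OF assms(7) \<open>1 \<le> l\<close> assms(3,5)] .
  qed (auto intro: increment_moment_bound_nonneg increment_moment_bound_mono)
qed

end
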